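(* For real $a,c,d$ and integer $k$, let \[ \begin{aligned} \lambda(k,a,c,d)={}&k^3\left(6a^4-6a^3+a^2+2ac+2d\right)\\ &+k^2\left(-384a^5+324a^4-42a^3-144a^2c-6ac-192ad-12d\right)\\ &+k\left(4608a^6-3072a^5+618a^4+2304a^3c-36a^3+144a^2c+4608a^2d-a^2+4ac+576ad+22d\right)\\ &+4608a^6-2688a^5-6144a^4c+300a^4-24576a^3d-4608a^2d-384ad-12d. \end{aligned} \] Let $a>\frac{22}{10}$, and let $c,d$ satisfy \[ \tfrac{1}{512}\left(-1536a^3+1728a^2-424a+25\right)\le c\le \tfrac{1}{128}\left(192a^2-104a+11\right), \] \[ \tfrac{1}{4096}\left(-384a^2+224a+512c-25\right)\le d\le \tfrac{1}{2048}\left(768a^3-512a^2-512ac+104a+192c-7\right). \] Then there exists an integer $k\ge 4$ such that $\lambda(k,a,c,d)<0$. *)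

theory Defs
  imports Complex_Main
begin

definition lam :: "int \<Rightarrow> real \<Rightarrow> real \<Rightarrow> real \<Rightarrow> real" where
  "lam k a c d =
     (real_of_int k)^3 * (6*a^4 - 6*a^3 + a^2 + 2*a*c + 2*d)
   + (real_of_int k)^2 * (-384*a^5 + 324*a^4 - 42*a^3 - 144*a^2*c - 6*a*c - 192*a*d - 12*d)
   + (real_of_int k) * (4608*a^6 - 3072*a^5 + 618*a^4 + 2304*a^3*c - 36*a^3 + 144*a^2*c
                        + 4608*a^2*d - a^2 + 4*a*c + 576*a*d + 22*d)
   + 4608*a^6 - 2688*a^5 - 6144*a^4*c + 300*a^4 - 24576*a^3*d - 4608*a^2*d - 384*a*d - 12*d"

end

theory Submission
  imports Defs
begin

text \<open>Take \<open>k = \<lfloor>32 a\<rfloor>\<close> and write \<open>a = 11/5 + s\<close>, \<open>k = 32 a - t\<close> with \<open>s \<ge> 0\<close> and \<open>0 \<le> t \<le> 1\<close>.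
  Since \<open>\<lambda>\<close> is affine in \<open>c\<close> and \<open>d\<close>, it equals its value at the lower bounds for \<open>c\<close> and \<open>d\<close>
  plus two slopes times the (nonnegative) distances from those bounds. As polynomials in \<open>s, t\<close>
  the value is negative and both slopes are nonpositive on the whole region, so \<open>\<lambda> < 0\<close>.\<close>

definition lam_at_lower_bounds :: "real \<Rightarrow> real \<Rightarrow> real" where
  "lam_at_lower_bounds s t =
     - 9159040377927/10000000 + 35126555607/4000000*t + 630486153/800000*t^2
     - 6886771163469/2000000*s - 11322555723/800000*s*t + 16312851/6400*s*t^2
     - 265034748609/50000*s^2 - 124361229/2000*s^2*t + 602727/200*s^2*t^2
     - 1096812561/250*s^3 - 3358869/50*s^3*t + 16881/10*s^3*t^2
     - 53107128/25*s^4 - 167184/5*s^4*t + 456*s^4*t^2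
     - 15111264/25*s^5 - 40368/5*s^5*t + 48*s^5*t^2
     - 469248/5*s^6 - 768*s^6*t
     - 6144*s^7"

definition lam_c_slope :: "real \<Rightarrow> real \<Rightarrow> real" where
  "lam_c_slope s t =
     - 451816227/1250 + 5154897/500*t + 10881/50*t^2 - 93/20*t^3
     - 80790264/125*s + 326804/25*s*t + 1026/5*s*t^2 - 2*s*t^3
     - 10822336/25*s^2 + 27504/5*s^2*t + 48*s^2*t^2
     - 643584/5*s^3 + 768*s^3*t
     - 14336*s^4"

definition lam_d_slope :: "real \<Rightarrow> real \<Rightarrow> real" where
  "lam_d_slope s t =
     - 9887772/125 + 195866/25*t - 12*t^2 - 2*t^3
     - 2796736/25*s + 34752/5*s*t
     - 262656/5*s^2 + 1536*s^2*t
     - 8192*s^3"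

lemma lam_decomposition:
  fixes a s t c d :: real and k :: int
  assumes "a = 11/5 + s" and "real_of_int k = 32*a - t"
  shows "lam k a c d = lam_at_lower_bounds s t
      + lam_c_slope s t * (c - (-1536*a^3 + 1728*a^2 - 424*a + 25) / 512)
      + lam_d_slope s t * (d - (-384*a^2 + 224*a + 512*c - 25) / 4096)"
  unfolding lam_def assms(2) lam_at_lower_bounds_def lam_c_slope_def lam_d_slope_def
  unfolding assms(1) by algebra

lemma monomial_le_leading_power:
  fixes s t :: real
  assumes "0 \<le> s" "0 \<le> t" "t \<le> 1"
  shows "0 \<le> s^i * t^j" "s^i * t^j \<le> s^i"
  using assms by (simp_all add: mult_left_le power_le_one)

text \<open>In all three polynomials the coefficient of each power \<open>s\<^sup>i\<close> is a polynomial in \<open>t\<close>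
  whose negative part outweighs its positive part on \<open>[0, 1]\<close>; so it suffices to bound every
  \<open>s\<^sup>i t\<^sup>j\<close> between \<open>0\<close> and \<open>s\<^sup>i\<close> and add up linearly.\<close>

lemma lam_at_lower_bounds_neg:
  fixes s t :: real
  assumes "0 \<le> s" "0 \<le> t" "t \<le> 1"
  shows "lam_at_lower_bounds s t < 0"
proof -
  note m = monomial_le_leading_power[OF assms]
  show ?thesis
    using m[of 0 1] m[of 0 2] m[of 1 1] m[of 1 2] m[of 2 1] m[of 2 2] m[of 3 1] m[of 3 2]
      m[of 4 1] m[of 4 2] m[of 5 1] m[of 5 2] m[of 6 1] m[of 6 0] m[of 7 0]
      m[of 3 0] m[of 4 0] m[of 5 0] m[of 2 0] assms(1)
    unfolding lam_at_lower_bounds_def by (simp only: power_0 power_one_right mult_1_left mult_1_right)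
qed

lemma lam_c_slope_nonpos:
  fixes s t :: real
  assumes "0 \<le> s" "0 \<le> t" "t \<le> 1"
  shows "lam_c_slope s t \<le> 0"
proof -
  note m = monomial_le_leading_power[OF assms]
  show ?thesis
    using m[of 0 1] m[of 0 2] m[of 0 3] m[of 1 1] m[of 1 2] m[of 1 3] m[of 2 1] m[of 2 2]
      m[of 3 1] m[of 2 0] m[of 3 0] m[of 4 0] assms(1)
    unfolding lam_c_slope_def by (simp only: power_0 power_one_right mult_1_left mult_1_right)
qed

lemma lam_d_slope_nonpos:
  fixes s t :: real
  assumes "0 \<le> s" "0 \<le> t" "t \<le> 1"
  shows "lam_d_slope s t \<le> 0"
proof -
  note m = monomial_le_leading_power[OF assms]
  show ?thesis
    using m[of 0 1] m[of 0 2] m[of 0 3] m[of 1 1] m[of 2 1] m[of 2 0] m[of 3 0] assms(1)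
    unfolding lam_d_slope_def by (simp only: power_0 power_one_right mult_1_left mult_1_right)
qed

theorem mainTheorem12:
  fixes a c d :: real
  assumes "a > 22/10"
    and "(-1536*a^3 + 1728*a^2 - 424*a + 25) / 512 \<le> c"
    and "c \<le> (192*a^2 - 104*a + 11) / 128"
    and "(-384*a^2 + 224*a + 512*c - 25) / 4096 \<le> d"
    and "d \<le> (768*a^3 - 512*a^2 - 512*a*c + 104*a + 192*c - 7) / 2048"
  shows "\<exists>k::int. k \<ge> 4 \<and> lam k a c d < 0"
proof -
  define k where "k = \<lfloor>32*a\<rfloor>"
  define s where "s = a - 11/5"
  define t where "t = 32*a - real_of_int k"
  have s: "0 \<le> s" using assms(1) by (simp add: s_def)
  have t: "0 \<le> t" "t \<le> 1" unfolding t_def k_def by linarith+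
  have "k \<ge> 4" unfolding k_def using assms(1) by linarith
  moreover have "lam k a c d < 0"
  proof -
    have "lam_c_slope s t * (c - (-1536*a^3 + 1728*a^2 - 424*a + 25) / 512) \<le> 0"
      using lam_c_slope_nonpos[OF s t] assms(2) by (simp add: mult_nonpos_nonneg)
    moreover have "lam_d_slope s t * (d - (-384*a^2 + 224*a + 512*c - 25) / 4096) \<le> 0"
      using lam_d_slope_nonpos[OF s t] assms(4) by (simp add: mult_nonpos_nonneg)
    ultimately show ?thesis
      using lam_decomposition[of a s k t c d] lam_at_lower_bounds_neg[OF s t]
      by (simp add: s_def t_def)
  qed
  ultimately show ?thesis by blast
qed

end
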